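(* For every $n\ge 1$ and every Boolean function $f:\{0,1\}^n \to \{0,1\}$, \[ \deg_{1/3}(f)^2 \geq \sqrt{\tfrac{6}{101}}\; bs(f). \]
   Context: A real polynomial $p$ on $\mathbb{R}^n$ is an $\varepsilon$-approximation of $f:\{0,1\}^n\to\{0,1\}$ if $|f(x)-p(x)|\le\varepsilon$ for all $x\in\{0,1\}^n$; $\deg_{1/3}(f)$ is the minimum degree of a $\tfrac13$-approximation of $f$. For $x\in\{0,1\}^n$ and $R\subseteq\{1,\dots,n\}$, $x^{(R)}$ is $x$ with the bits indexed by $R$ flipped. The local block sensitivity $bs(f,x)$ is the largest $t$ such that there exist pairwise disjoint $R_1,\dots,R_t\subseteq\{1,\dots,n\}$ with $f(x)\ne f(x^{(R_i)})$ for all $i$; $bs(f)=\max_x bs(f,x)$. *)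

theory Defs
  imports Complex_Main
begin

text \<open>Points of the Boolean cube {0,1}^n are represented as subsets x of {0..<n}
  (x = set of coordinates equal to 1). A Boolean function is f :: nat set => bool,
  only its values on Pow {0..<n} matter. Flipping the bits in R is symmetric difference.\<close>

definition cube :: "nat \<Rightarrow> nat set set" where
  "cube n = Pow {0..<n}"

definition flip :: "nat set \<Rightarrow> nat set \<Rightarrow> nat set" where
  "flip x R = (x - R) \<union> (R - x)"

definition embed :: "nat set \<Rightarrow> nat \<Rightarrow> real" where
  "embed x = (\<lambda>i. if i \<in> x then 1 else 0)"

definition exps :: "nat \<Rightarrow> nat \<Rightarrow> (nat \<Rightarrow> nat) set" where
  "exps n d = {\<alpha>. (\<forall>i. n \<le> i \<longrightarrow> \<alpha> i = 0) \<and> (\<Sum>i<n. \<alpha> i) \<le> d}"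

text \<open>p is a real polynomial on R^n of degree at most d (points of R^n are
  functions nat => real, of which only coordinates < n are used).\<close>
definition poly_deg_le :: "nat \<Rightarrow> nat \<Rightarrow> ((nat \<Rightarrow> real) \<Rightarrow> real) \<Rightarrow> bool" where
  "poly_deg_le n d p \<longleftrightarrow> (\<exists>c :: (nat \<Rightarrow> nat) \<Rightarrow> real.
      \<forall>x. p x = (\<Sum>\<alpha>\<in>exps n d. c \<alpha> * (\<Prod>i<n. x i ^ \<alpha> i)))"

definition approximates :: "nat \<Rightarrow> real \<Rightarrow> (nat set \<Rightarrow> bool) \<Rightarrow> ((nat \<Rightarrow> real) \<Rightarrow> real) \<Rightarrow> bool" where
  "approximates n \<epsilon> f p \<longleftrightarrow> (\<forall>x\<in>cube n. \<bar>of_bool (f x) - p (embed x)\<bar> \<le> \<epsilon>)"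

definition approx_deg :: "nat \<Rightarrow> (nat set \<Rightarrow> bool) \<Rightarrow> nat" where
  "approx_deg n f = (LEAST d. \<exists>p. poly_deg_le n d p \<and> approximates n (1/3) f p)"

definition local_bs :: "nat \<Rightarrow> (nat set \<Rightarrow> bool) \<Rightarrow> nat set \<Rightarrow> nat" where
  "local_bs n f x = Max {t. \<exists>R :: nat \<Rightarrow> nat set.
      (\<forall>i<t. R i \<subseteq> {0..<n}) \<and>
      (\<forall>i<t. \<forall>j<t. i \<noteq> j \<longrightarrow> R i \<inter> R j = {}) \<and>
      (\<forall>i<t. f x \<noteq> f (flip x (R i)))}"

definition bs :: "nat \<Rightarrow> (nat set \<Rightarrow> bool) \<Rightarrow> nat" where
  "bs n f = Max (local_bs n f ` cube n)"

end

(*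
  Take a point x with b = bs(f) disjoint sensitive blocks and a 1/3-approximation p of f of
  degree d; replacing f by its negation and p by 1 - p we may assume f(x) = 0.  Flipping every
  block independently with probability t and averaging p over the resulting points gives a
  univariate polynomial R(t) of degree at most d (Nisan-Szegedy symmetrization: each block
  contributes a factor that is linear in t).  On [0,1] the values of R lie in [-1/3, 4/3];
  moreover R(0) <= 1/3, and R'(0) = sum_j (v{j} - v{}) >= b (2/3 - R(0)), where v S is the value
  of p after flipping the blocks in S.  Lagrange interpolation of R at the extremal points of
  the Chebyshev polynomial T_d yields a Markov inequality at the endpoint that also takes R(0)
  into account, R'(0) <= ((hi - lo) - (R(0) - lo)/2) d^2 for R with values in [lo, hi], and
  hence b <= 4 d^2.  This is stronger than the claim, as sqrt(6/101) < 1/4.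
*)

theory Submission
  imports Defs "HOL-Analysis.Complex_Transcendental" "HOL-Computational_Algebra.Polynomial"
begin

section \<open>Lagrange interpolation\<close>

definition lagrange_basis :: "(nat \<Rightarrow> 'a::field) \<Rightarrow> nat \<Rightarrow> nat \<Rightarrow> 'a poly" where
  "lagrange_basis \<tau> d j =
     smult (inverse (\<Prod>k\<in>{..d}-{j}. \<tau> j - \<tau> k)) (\<Prod>k\<in>{..d}-{j}. [:- \<tau> k, 1:])"

lemma poly_lagrange_basis:
  "poly (lagrange_basis \<tau> d j) y = (\<Prod>k\<in>{..d}-{j}. y - \<tau> k) / (\<Prod>k\<in>{..d}-{j}. \<tau> j - \<tau> k)"
  by (simp add: lagrange_basis_def poly_prod divide_inverse)

lemma poly_lagrange_basis_node:
  assumes "inj_on \<tau> {..d}" "i \<le> d" "j \<le> d"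
  shows "poly (lagrange_basis \<tau> d j) (\<tau> i) = (if i = j then 1 else 0)"
proof (cases "i = j")
  case True
  have "(\<Prod>k\<in>{..d}-{j}. \<tau> j - \<tau> k) \<noteq> 0"
    using assms by (auto simp: inj_on_def)
  then show ?thesis using True by (simp add: poly_lagrange_basis)
next
  case False
  then have "(\<Prod>k\<in>{..d}-{j}. \<tau> i - \<tau> k) = 0"
    using assms by (intro prod_zero bexI[of _ i]) auto
  then show ?thesis using False by (simp add: poly_lagrange_basis)
qed

lemma degree_lagrange_basis_le:
  assumes "j \<le> d"
  shows "degree (lagrange_basis \<tau> d j) \<le> d"
proof -
  have "degree (lagrange_basis \<tau> d j) \<le> degree (\<Prod>k\<in>{..d}-{j}. [:- \<tau> k, 1:])"
    unfolding lagrange_basis_def by (rule degree_smult_le)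
  also have "\<dots> \<le> (\<Sum>k\<in>{..d}-{j}. degree [:- \<tau> k, 1:])"
    using degree_prod_sum_le[of "{..d}-{j}" "\<lambda>k. [:- \<tau> k, 1:]"] by (simp add: o_def)
  also have "\<dots> = d"
    using assms by simp
  finally show ?thesis .
qed

lemma lagrange_interpolation:
  fixes P :: "'a::field poly"
  assumes inj: "inj_on \<tau> {..d}" and deg: "degree P \<le> d"
  shows "P = (\<Sum>j\<le>d. smult (poly P (\<tau> j)) (lagrange_basis \<tau> d j))"
proof (rule poly_eqI_degree[where A = "\<tau> ` {..d}"])
  fix y assume "y \<in> \<tau> ` {..d}"
  then obtain i where i: "i \<le> d" "y = \<tau> i" by auto
  have "poly (\<Sum>j\<le>d. smult (poly P (\<tau> j)) (lagrange_basis \<tau> d j)) y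
      = (\<Sum>j\<le>d. if i = j then poly P (\<tau> j) else 0)"
    unfolding poly_sum using inj i by (intro sum.cong) (auto simp: poly_lagrange_basis_node)
  also have "\<dots> = poly P y"
    using i by simp
  finally show "poly P y = poly (\<Sum>j\<le>d. smult (poly P (\<tau> j)) (lagrange_basis \<tau> d j)) y" ..
next
  have card: "card (\<tau> ` {..d}) = Suc d"
    using inj by (simp add: card_image)
  then show "degree P < card (\<tau> ` {..d})"
    using deg by simp
  have "degree (\<Sum>j\<le>d. smult (poly P (\<tau> j)) (lagrange_basis \<tau> d j)) \<le> d"
    by (intro degree_sum_le) (auto intro: order.trans[OF degree_smult_le] degree_lagrange_basis_le)
  then show "degree (\<Sum>j\<le>d. smult (poly P (\<tau> j)) (lagrange_basis \<tau> d j)) < card (\<tau> ` {..d})"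
    using card by simp
qed

corollary coeff_1_lagrange_interpolation:
  fixes P :: "'a::field poly"
  assumes "inj_on \<tau> {..d}" and "degree P \<le> d"
  shows "coeff P 1 = (\<Sum>j\<le>d. poly P (\<tau> j) * coeff (lagrange_basis \<tau> d j) 1)"
proof -
  have "coeff P 1 = coeff (\<Sum>j\<le>d. smult (poly P (\<tau> j)) (lagrange_basis \<tau> d j)) 1"
    using lagrange_interpolation[OF assms] by (rule arg_cong)
  then show ?thesis
    by (simp add: coeff_sum)
qed

lemma coeff_1_prod_monic_linear:
  fixes a :: "nat \<Rightarrow> 'a::comm_ring_1"
  assumes "finite K"
  shows "coeff (\<Prod>k\<in>K. [:a k, 1:]) 1 = (\<Sum>k\<in>K. \<Prod>l\<in>K-{k}. a l)"
  using assms
proof (induction K rule: finite_induct)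
  case (insert x F)
  have remove: "(\<Prod>l\<in>insert x F - {k}. a l) = a x * (\<Prod>l\<in>F - {k}. a l)" if "k \<in> F" for k
  proof -
    have "insert x F - {k} = insert x (F - {k})"
      using that insert by auto
    then show ?thesis
      using insert by simp
  qed
  have "coeff (\<Prod>k\<in>insert x F. [:a k, 1:]) 1
      = a x * coeff (\<Prod>k\<in>F. [:a k, 1:]) 1 + coeff (\<Prod>k\<in>F. [:a k, 1:]) 0"
    using insert by simp
  also have "\<dots> = a x * (\<Sum>k\<in>F. \<Prod>l\<in>F-{k}. a l) + (\<Prod>k\<in>F. a k)"
    using insert by (simp add: poly_0_coeff_0[symmetric] poly_prod)
  also have "\<dots> = (\<Sum>k\<in>insert x F. \<Prod>l\<in>insert x F-{k}. a l)"
    using insert by (simp add: remove sum_distrib_left)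
  finally show ?case .
qed simp

lemma lagrange_basis_coeff_1_sign:
  fixes \<tau> :: "nat \<Rightarrow> 'a::linordered_field"
  assumes mono: "\<And>j k. j < k \<Longrightarrow> k \<le> d \<Longrightarrow> \<tau> j < \<tau> k" and \<tau>0: "\<tau> 0 = 0"
    and j: "1 \<le> j" "j \<le> d"
  shows "(-1) ^ (j + 1) * coeff (lagrange_basis \<tau> d j) 1 \<ge> 0"
proof -
  define K where "K = {1..d} - {j}"
  have "{..d} - {j} = insert 0 K"
    using j by (auto simp: K_def)
  then have "(\<Prod>k\<in>{..d}-{j}. [:- \<tau> k, 1:]) = [:0, 1:] * (\<Prod>k\<in>K. [:- \<tau> k, 1:])"
    using \<tau>0 by (simp add: K_def)
  then have "coeff (\<Prod>k\<in>{..d}-{j}. [:- \<tau> k, 1:]) 1 = (\<Prod>k\<in>K. - \<tau> k)"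
    by (simp add: poly_0_coeff_0[symmetric] poly_prod)
  also have "\<dots> = (-1) ^ (d - 1) * (\<Prod>k\<in>K. \<tau> k)"
    using j by (simp add: prod_uminus K_def)
  finally have numer: "coeff (\<Prod>k\<in>{..d}-{j}. [:- \<tau> k, 1:]) 1 = (-1) ^ (d - 1) * (\<Prod>k\<in>K. \<tau> k)" .
  have split: "{..d} - {j} = {..<j} \<union> {j<..d}"
    using j by auto
  have "(\<Prod>k\<in>{..d}-{j}. \<tau> j - \<tau> k)
      = (\<Prod>k\<in>{..<j}. \<tau> j - \<tau> k) * (\<Prod>k\<in>{j<..d}. - (\<tau> k - \<tau> j))"
    unfolding split by (subst prod.union_disjoint) auto
  also have "\<dots> = (-1) ^ (d - j) * ((\<Prod>k\<in>{..<j}. \<tau> j - \<tau> k) * (\<Prod>k\<in>{j<..d}. \<tau> k - \<tau> j))"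
    by (simp only: prod_uminus card_greaterThanAtMost mult.left_commute)
  finally have denom: "(\<Prod>k\<in>{..d}-{j}. \<tau> j - \<tau> k)
      = (-1) ^ (d - j) * ((\<Prod>k\<in>{..<j}. \<tau> j - \<tau> k) * (\<Prod>k\<in>{j<..d}. \<tau> k - \<tau> j))" .
  have sign: "(-1::'a) ^ (j + 1) * (-1) ^ (d - 1) = (-1) ^ (d - j)"
  proof -
    have "(j + 1) + (d - 1) = (d - j) + 2 * j"
      using j by simp
    then show ?thesis
      by (metis power_add neg_one_even_power even_mult_iff even_numeral mult_1_right)
  qed
  have "(-1) ^ (j + 1) * coeff (lagrange_basis \<tau> d j) 1
      = ((-1) ^ (j + 1) * (-1) ^ (d - 1)) * (\<Prod>k\<in>K. \<tau> k) /
        ((-1) ^ (d - j) * ((\<Prod>k\<in>{..<j}. \<tau> j - \<tau> k) * (\<Prod>k\<in>{j<..d}. \<tau> k - \<tau> j)))"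
    unfolding lagrange_basis_def coeff_smult numer denom by (simp add: divide_inverse mult_ac)
  also have "\<dots> = (\<Prod>k\<in>K. \<tau> k) / ((\<Prod>k\<in>{..<j}. \<tau> j - \<tau> k) * (\<Prod>k\<in>{j<..d}. \<tau> k - \<tau> j))"
    unfolding sign by simp
  also have "\<dots> \<ge> 0"
    using mono[of 0] \<tau>0 mono j by (intro divide_nonneg_pos prod_nonneg mult_pos_pos prod_pos) (auto simp: K_def intro!: less_imp_le)
  finally show ?thesis .
qed

lemma lagrange_basis_0_coeff_1:
  fixes \<tau> :: "nat \<Rightarrow> 'a::linordered_field"
  assumes pos: "\<And>k. 1 \<le> k \<Longrightarrow> k \<le> d \<Longrightarrow> \<tau> k > 0" and \<tau>0: "\<tau> 0 = 0"
  shows "coeff (lagrange_basis \<tau> d 0) 1 = - (\<Sum>k=1..d. 1 / \<tau> k)"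
proof -
  have nodes: "{..d} - {0} = {1..d}"
    by auto
  have "(\<Prod>l\<in>{1..d}-{k}. - \<tau> l) / (\<Prod>k\<in>{1..d}. - \<tau> k) = - (1 / \<tau> k)"
    if k: "k \<in> {1..d}" for k
  proof -
    have "(\<Prod>k\<in>{1..d}. - \<tau> k) = - \<tau> k * (\<Prod>l\<in>{1..d}-{k}. - \<tau> l)"
      using k by (simp add: prod.remove)
    moreover have "(\<Prod>l\<in>{1..d}-{k}. - \<tau> l) \<noteq> 0" "\<tau> k \<noteq> 0"
      using pos k by force+
    ultimately show ?thesis
      by simp
  qed
  note term_eq = this
  have "coeff (lagrange_basis \<tau> d 0) 1
      = (\<Sum>k\<in>{1..d}. \<Prod>l\<in>{1..d}-{k}. - \<tau> l) / (\<Prod>k\<in>{1..d}. - \<tau> k)"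
    unfolding lagrange_basis_def coeff_smult nodes
    using coeff_1_prod_monic_linear[of "{1..d}" "\<lambda>k. - \<tau> k"] \<tau>0
    by (simp add: divide_inverse mult.commute)
  also have "\<dots> = (\<Sum>k\<in>{1..d}. - (1 / \<tau> k))"
    unfolding sum_divide_distrib using term_eq by (rule sum.cong[OF refl])
  finally show ?thesis
    by (simp add: sum_negf)
qed

section \<open>Chebyshev polynomials and a Markov inequality at an endpoint\<close>

fun chebyshev :: "nat \<Rightarrow> real poly" where
  "chebyshev 0 = 1"
| "chebyshev (Suc 0) = [:0, 1:]"
| "chebyshev (Suc (Suc n)) = [:0, 2:] * chebyshev (Suc n) - chebyshev n"

lemma poly_chebyshev_cos: "poly (chebyshev n) (cos t) = cos (real n * t)"
proof (induction n rule: chebyshev.induct)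
  case (3 n)
  have "cos (real (Suc (Suc n)) * t) + cos (real n * t) = 2 * cos t * cos (real (Suc n) * t)"
    using cos_add[of "real (Suc n) * t" t] cos_diff[of "real (Suc n) * t" t]
    by (simp add: algebra_simps)
  then show ?case
    using 3 by (simp add: algebra_simps)
qed auto

lemma degree_chebyshev_le: "degree (chebyshev n) \<le> n"
proof (induction n rule: chebyshev.induct)
  case (3 n)
  have "degree ([:0, 2:] * chebyshev (Suc n)) \<le> Suc (Suc n)"
    using degree_mult_le[of "[:0, 2:]" "chebyshev (Suc n)"] 3 by simp
  then show ?case
    using 3 by (simp add: degree_diff_le)
qed auto

lemma poly_chebyshev_1: "poly (chebyshev n) 1 = 1"
  using poly_chebyshev_cos[of n 0] by simp

lemma poly_pderiv_chebyshev_1: "poly (pderiv (chebyshev n)) 1 = real n ^ 2"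
proof (induction n rule: chebyshev.induct)
  case (3 n)
  then show ?case
    by (simp add: pderiv_diff pderiv_mult pderiv_smult pderiv_pCons poly_chebyshev_1 algebra_simps power2_eq_square)
qed (simp_all add: pderiv_pCons)

text \<open>The extremal points \<open>cos (j\<pi>/d)\<close> of \<open>T\<^sub>d\<close> on \<open>[-1,1]\<close>, moved to \<open>[0,1]\<close> by \<open>x = 1 - 2t\<close>.\<close>

definition cheb_node :: "nat \<Rightarrow> nat \<Rightarrow> real" where
  "cheb_node d j = (1 - cos (real j * pi / real d)) / 2"

definition shifted_chebyshev :: "nat \<Rightarrow> real poly" where
  "shifted_chebyshev d = pcompose (chebyshev d) [:1, -2:]"

lemma cheb_node_0 [simp]: "cheb_node d 0 = 0"
  by (simp add: cheb_node_def)

lemma cheb_node_bounds: "0 \<le> cheb_node d j \<and> cheb_node d j \<le> 1"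
  using cos_ge_minus_one[of "real j * pi / real d"] cos_le_one[of "real j * pi / real d"]
  by (simp add: cheb_node_def)

lemma cheb_node_strict_mono:
  assumes "j < k" "k \<le> d"
  shows "cheb_node d j < cheb_node d k"
proof -
  have "real j * pi / real d < real k * pi / real d"
    using assms by (intro divide_strict_right_mono mult_strict_right_mono) auto
  moreover have "real k * pi / real d \<le> pi"
    using assms by (simp add: divide_le_eq)
  ultimately have "cos (real k * pi / real d) < cos (real j * pi / real d)"
    by (subst cos_mono_less_eq) auto
  then show ?thesis
    by (simp add: cheb_node_def)
qed

lemma inj_on_cheb_node: "inj_on (cheb_node d) {..d}"
  by (rule inj_onI) (metis atMost_iff less_irrefl linorder_neq_iff cheb_node_strict_mono)

lemma poly_shifted_chebyshev_cheb_node: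
  assumes "1 \<le> d"
  shows "poly (shifted_chebyshev d) (cheb_node d j) = (-1) ^ j"
proof -
  have "poly (shifted_chebyshev d) (cheb_node d j) = poly (chebyshev d) (cos (real j * pi / real d))"
    by (simp add: shifted_chebyshev_def poly_pcompose cheb_node_def field_simps)
  also have "\<dots> = cos (real j * pi)"
    using assms by (simp add: poly_chebyshev_cos)
  finally show ?thesis
    by simp
qed

lemma coeff_1_shifted_chebyshev: "coeff (shifted_chebyshev d) 1 = - 2 * real d ^ 2"
proof -
  have "coeff (shifted_chebyshev d) 1 = poly (pderiv (shifted_chebyshev d)) 0"
    by (simp add: poly_0_coeff_0 coeff_pderiv)
  then show ?thesis
    by (simp add: shifted_chebyshev_def pderiv_pcompose poly_pcompose poly_pderiv_chebyshev_1 pderiv_pCons)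
qed

lemma degree_shifted_chebyshev_le: "degree (shifted_chebyshev d) \<le> d"
  using degree_pcompose_le[of "chebyshev d" "[:1, -2:]"] degree_chebyshev_le[of d]
  by (simp add: shifted_chebyshev_def)

lemma inverse_cheb_node_ge:
  assumes "1 \<le> k" "k \<le> d"
  shows "4 * real d ^ 2 / (real k ^ 2 * pi ^ 2) \<le> 1 / cheb_node d k"
proof -
  have "0 < cheb_node d k"
    using cheb_node_strict_mono[of 0 k d] assms by simp
  moreover have "cheb_node d k \<le> real k ^ 2 * pi ^ 2 / (4 * real d ^ 2)"
  proof -
    have "1 - cos (real k * pi / real d) = 2 * sin (real k * pi / real d / 2) ^ 2"
      using cos_double_sin[of "real k * pi / real d / 2"] by simp
    also have "\<dots> \<le> 2 * (real k * pi / real d / 2) ^ 2"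
      using power_mono[OF abs_sin_x_le_abs_x abs_ge_zero, of "real k * pi / real d / 2" 2]
      by simp
    finally show ?thesis
      by (simp add: cheb_node_def power_divide power_mult_distrib)
  qed
  ultimately have "1 / (real k ^ 2 * pi ^ 2 / (4 * real d ^ 2)) \<le> 1 / cheb_node d k"
    using assms by (intro divide_left_mono) auto
  then show ?thesis
    by simp
qed

lemma sum_inverse_cheb_node_ge:
  assumes "1 \<le> d"
  shows "real d ^ 2 / 2 \<le> (\<Sum>k=1..d. 1 / cheb_node d k)"
proof (cases "d = 1")
  case True
  then show ?thesis
    by (simp add: cheb_node_def)
next
  case False
  have "pi ^ 2 \<le> 10"
    using mult_mono[of pi "3.15" pi "3.15"] pi_approx(2) by (simp add: power2_eq_square)
  then have "real d ^ 2 / 2 \<le> 4 * real d ^ 2 / (real 1 ^ 2 * pi ^ 2) + 4 * real d ^ 2 / (real 2 ^ 2 * pi ^ 2)"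
    by (simp add: field_simps mult_right_mono)
  also have "\<dots> \<le> 1 / cheb_node d 1 + 1 / cheb_node d 2"
    using False assms by (intro add_mono inverse_cheb_node_ge) auto
  also have "\<dots> = (\<Sum>k\<in>{1, 2}. 1 / cheb_node d k)"
    by simp
  also have "\<dots> \<le> (\<Sum>k=1..d. 1 / cheb_node d k)"
    using False assms cheb_node_bounds by (intro sum_mono2) auto
  finally show ?thesis .
qed

definition cheb_weight :: "nat \<Rightarrow> nat \<Rightarrow> real" where
  "cheb_weight d j = coeff (lagrange_basis (cheb_node d) d j) 1"

lemma coeff_1_cheb_weight:
  fixes P :: "real poly"
  assumes "degree P \<le> d"
  shows "coeff P 1 = poly P 0 * cheb_weight d 0 + (\<Sum>j=1..d. poly P (cheb_node d j) * cheb_weight d j)"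
proof -
  have "{..d} = insert 0 {1..d}"
    by auto
  then show ?thesis
    using coeff_1_lagrange_interpolation[OF inj_on_cheb_node assms] by (simp add: cheb_weight_def)
qed

lemma cheb_weight_0: "cheb_weight d 0 = - (\<Sum>k=1..d. 1 / cheb_node d k)"
  unfolding cheb_weight_def
  by (rule lagrange_basis_0_coeff_1) (use cheb_node_strict_mono[of 0] in auto)

lemma abs_cheb_weight:
  assumes "1 \<le> j" "j \<le> d"
  shows "\<bar>cheb_weight d j\<bar> = (-1) ^ (j + 1) * cheb_weight d j"
proof -
  have "0 \<le> (-1) ^ (j + 1) * cheb_weight d j"
    unfolding cheb_weight_def using assms
    by (intro lagrange_basis_coeff_1_sign) (auto intro: cheb_node_strict_mono)
  moreover have "\<bar>(-1) ^ (j + 1) * cheb_weight d j\<bar> = \<bar>cheb_weight d j\<bar>"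
    by (simp add: abs_mult)
  ultimately show ?thesis
    by simp
qed

lemma sum_cheb_weight: "(\<Sum>j=1..d. cheb_weight d j) = (\<Sum>k=1..d. 1 / cheb_node d k)"
  using coeff_1_cheb_weight[of 1 d] by (simp add: cheb_weight_0)

text \<open>Interpolate \<open>T\<^sub>d(1 - 2t)\<close>, which takes the value \<open>(-1)\<^sup>j\<close> at \<open>cheb_node d j\<close>.\<close>

lemma alternating_sum_cheb_weight:
  assumes "1 \<le> d"
  shows "(\<Sum>j=1..d. (-1) ^ j * cheb_weight d j) = (\<Sum>k=1..d. 1 / cheb_node d k) - 2 * real d ^ 2"
  using coeff_1_cheb_weight[OF degree_shifted_chebyshev_le] coeff_1_shifted_chebyshev[of d]
    poly_shifted_chebyshev_cheb_node[OF assms] poly_shifted_chebyshev_cheb_node[OF assms, of 0]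
  by (simp add: cheb_weight_0)

lemma markov_endpoint_cheb_nodes:
  fixes R :: "real poly"
  assumes d: "1 \<le> d" "degree R \<le> d"
    and bounds: "\<And>t. 0 \<le> t \<Longrightarrow> t \<le> 1 \<Longrightarrow> lo \<le> poly R t \<and> poly R t \<le> hi"
  shows "coeff R 1 \<le> (hi - lo) * real d ^ 2 - (\<Sum>k=1..d. 1 / cheb_node d k) * (poly R 0 - lo)"
proof -
  define w where "w = cheb_weight d"
  define W where "W = (\<Sum>k=1..d. 1 / cheb_node d k)"
  have term_le: "poly R (cheb_node d j) * w j \<le> (hi + lo) / 2 * w j + (hi - lo) / 2 * \<bar>w j\<bar>" for j
  proof -
    have "(poly R (cheb_node d j) - (hi + lo) / 2) * w j
        \<le> \<bar>poly R (cheb_node d j) - (hi + lo) / 2\<bar> * \<bar>w j\<bar>"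
      unfolding abs_mult[symmetric] by (rule abs_ge_self)
    also have "\<dots> \<le> (hi - lo) / 2 * \<bar>w j\<bar>"
    proof (rule mult_right_mono)
      show "\<bar>poly R (cheb_node d j) - (hi + lo) / 2\<bar> \<le> (hi - lo) / 2"
        using bounds[of "cheb_node d j"] cheb_node_bounds[of d j] by (auto simp: abs_le_iff field_simps)
    qed simp
    finally show ?thesis
      by (simp add: field_simps)
  qed
  have "(\<Sum>j=1..d. poly R (cheb_node d j) * w j)
      \<le> (\<Sum>j=1..d. (hi + lo) / 2 * w j + (hi - lo) / 2 * \<bar>w j\<bar>)"
    by (rule sum_mono) (rule term_le)
  also have "\<dots> = (hi + lo) / 2 * (\<Sum>j=1..d. w j) - (hi - lo) / 2 * (\<Sum>j=1..d. (-1) ^ j * w j)"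
    by (simp add: w_def abs_cheb_weight sum.distrib sum_subtractf sum_distrib_left sum_negf)
  also have "\<dots> = (hi + lo) / 2 * W - (hi - lo) / 2 * (W - 2 * real d ^ 2)"
    unfolding w_def W_def sum_cheb_weight alternating_sum_cheb_weight[OF d(1)] ..
  finally have "(\<Sum>j=1..d. poly R (cheb_node d j) * w j)
      \<le> (hi + lo) / 2 * W - (hi - lo) / 2 * (W - 2 * real d ^ 2)" .
  moreover have "coeff R 1 = - poly R 0 * W + (\<Sum>j=1..d. poly R (cheb_node d j) * w j)"
    using coeff_1_cheb_weight[OF d(2)] by (simp add: w_def W_def cheb_weight_0)
  ultimately show ?thesis
    unfolding W_def[symmetric] by (simp add: field_simps)
qed

theorem markov_endpoint:
  fixes R :: "real poly"
  assumes "degree R \<le> d"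
    and bounds: "\<And>t. 0 \<le> t \<Longrightarrow> t \<le> 1 \<Longrightarrow> lo \<le> poly R t \<and> poly R t \<le> hi"
  shows "coeff R 1 \<le> (hi - lo - (poly R 0 - lo) / 2) * real d ^ 2"
proof (cases "d = 0")
  case True
  then show ?thesis
    using assms by (simp add: coeff_eq_0)
next
  case False
  have "real d ^ 2 / 2 * (poly R 0 - lo) \<le> (\<Sum>k=1..d. 1 / cheb_node d k) * (poly R 0 - lo)"
    using False bounds[of 0] by (intro mult_right_mono sum_inverse_cheb_node_ge) auto
  then show ?thesis
    using markov_endpoint_cheb_nodes[of d R lo hi] False assms by (simp add: algebra_simps)
qed

section \<open>Symmetrization along disjoint blocks\<close>

text \<open>As a function of \<open>t\<close>, the expected value of \<open>v S\<close> for a random \<open>S \<subseteq> {..<b}\<close> that contains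
  each element independently with probability \<open>t\<close>.\<close>

definition binomial_average :: "nat \<Rightarrow> (nat set \<Rightarrow> real) \<Rightarrow> real poly" where
  "binomial_average b v = (\<Sum>S\<in>Pow {..<b}. smult (v S) (monom 1 (card S) * [:1, -1:] ^ (b - card S)))"

lemma poly_binomial_average:
  "poly (binomial_average b v) t = (\<Sum>S\<in>Pow {..<b}. t ^ card S * (1 - t) ^ (b - card S) * v S)"
  by (simp add: binomial_average_def poly_sum poly_monom mult_ac)

lemma binomial_average_cong:
  assumes "\<And>S. S \<subseteq> {..<b} \<Longrightarrow> v S = w S"
  shows "binomial_average b v = binomial_average b w"
  unfolding binomial_average_def using assms by (intro sum.cong) auto

lemma poly_binomial_average_0: "poly (binomial_average b v) 0 = v {}"
proof -
  have "poly (binomial_average b v) 0 = (\<Sum>S\<in>Pow {..<b}. if S = {} then v S else 0)"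
    unfolding poly_binomial_average
    by (intro sum.cong) (auto simp: power_0_left dest: finite_subset)
  then show ?thesis
    by simp
qed

lemma coeff_1_binomial_average:
  "coeff (binomial_average b v) 1 = (\<Sum>j<b. v {j}) - real b * v {}"
proof -
  have coeff_1_power: "coeff ([:1, -1:] ^ m :: real poly) 0 = 1 \<and> coeff ([:1, -1:] ^ m :: real poly) 1 = - real m" for m
    by (induction m) (simp_all add: coeff_pCons)
  have "coeff (binomial_average b v) 1
      = (\<Sum>S\<in>Pow {..<b}. (if S = {} then - real b * v S else 0) + (if card S = 1 then v S else 0))"
    unfolding binomial_average_def coeff_sum coeff_smult
  proof (rule sum.cong)
    fix S assume "S \<in> Pow {..<b}"
    then have "finite S"
      by (auto dest: finite_subset)
    then show "v S * coeff (monom 1 (card S) * [:1, -1:] ^ (b - card S)) 1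
        = (if S = {} then - real b * v S else 0) + (if card S = 1 then v S else 0)"
      using coeff_1_power[of b] coeff_1_power[of "b - card S"]
      by (cases "card S") (auto simp: coeff_monom_mult)
  qed simp
  also have "\<dots> = - real b * v {} + (\<Sum>S\<in>{S \<in> Pow {..<b}. card S = 1}. v S)"
    by (simp add: sum.distrib sum.inter_filter[symmetric])
  also have "{S \<in> Pow {..<b}. card S = 1} = (\<lambda>j. {j}) ` {..<b}"
    by (auto simp: card_1_singleton_iff)
  also have "(\<Sum>S\<in>(\<lambda>j. {j}) ` {..<b}. v S) = (\<Sum>j<b. v {j})"
    by (subst sum.reindex) (auto simp: inj_on_def)
  finally show ?thesis
    by simp
qed

lemma poly_binomial_average_mono:
  assumes "0 \<le> t" "t \<le> 1" "\<And>S. S \<subseteq> {..<b} \<Longrightarrow> v S \<le> v' S"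
  shows "poly (binomial_average b v) t \<le> poly (binomial_average b v') t"
  unfolding poly_binomial_average using assms by (intro sum_mono mult_left_mono) auto

lemma poly_binomial_average_prod:
  "poly (binomial_average b (\<lambda>S. \<Prod>j<b. if j \<in> S then e j else a j)) t = (\<Prod>j<b. t * e j + (1 - t) * a j)"
proof -
  have "(\<Prod>j<b. t * e j + (1 - t) * a j)
      = (\<Sum>S\<in>Pow {..<b}. (\<Prod>j\<in>S. t * e j) * (\<Prod>j\<in>{..<b}-S. (1 - t) * a j))"
    by (rule prod_add) simp
  also have "\<dots> = poly (binomial_average b (\<lambda>S. \<Prod>j<b. if j \<in> S then e j else a j)) t"
    unfolding poly_binomial_average
  proof (rule sum.cong)
    fix S assume "S \<in> Pow {..<b}"
    then have S: "S \<subseteq> {..<b}" "finite S"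
      by (auto dest: finite_subset)
    then have "(\<Prod>j<b. if j \<in> S then e j else a j) = (\<Prod>j\<in>S. e j) * (\<Prod>j\<in>{..<b}-S. a j)"
      by (simp add: prod.If_cases Int_absorb1 Diff_eq)
    then show "(\<Prod>j\<in>S. t * e j) * (\<Prod>j\<in>{..<b}-S. (1 - t) * a j)
        = t ^ card S * (1 - t) ^ (b - card S) * (\<Prod>j<b. if j \<in> S then e j else a j)"
      using S by (simp add: prod.distrib card_Diff_subset mult_ac)
  qed simp
  finally show ?thesis ..
qed

lemma binomial_average_prod:
  "binomial_average b (\<lambda>S. C * (\<Prod>j<b. if j \<in> S then e j else a j))
    = smult C (\<Prod>j<b. [:a j, e j - a j:])"
proof (rule poly_eq_poly_eq_iff[THEN iffD1], rule ext)
  fix t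
  have "poly (binomial_average b (\<lambda>S. C * (\<Prod>j<b. if j \<in> S then e j else a j))) t
      = C * poly (binomial_average b (\<lambda>S. \<Prod>j<b. if j \<in> S then e j else a j)) t"
    by (simp add: poly_binomial_average sum_distrib_left mult_ac)
  then show "poly (binomial_average b (\<lambda>S. C * (\<Prod>j<b. if j \<in> S then e j else a j))) t
      = poly (smult C (\<Prod>j<b. [:a j, e j - a j:])) t"
    by (simp add: poly_binomial_average_prod poly_prod algebra_simps)
qed

lemma poly_binomial_average_const: "poly (binomial_average b (\<lambda>_. c)) t = c"
proof -
  have "poly (binomial_average b (\<lambda>_. 1)) t = 1"
    using poly_binomial_average_prod[of b "\<lambda>_. 1" "\<lambda>_. 1" t] by simp
  then show ?thesis
    by (simp add: poly_binomial_average sum_distrib_right[symmetric])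
qed

lemma poly_binomial_average_bounds:
  assumes "0 \<le> t" "t \<le> 1" "\<And>S. S \<subseteq> {..<b} \<Longrightarrow> lo \<le> v S \<and> v S \<le> hi"
  shows "lo \<le> poly (binomial_average b v) t \<and> poly (binomial_average b v) t \<le> hi"
  using poly_binomial_average_mono[of t b "\<lambda>_. lo" v] poly_binomial_average_mono[of t b v "\<lambda>_. hi"]
    assms by (simp add: poly_binomial_average_const)

lemma binomial_average_sum:
  "binomial_average b (\<lambda>S. \<Sum>\<alpha>\<in>E. c \<alpha> * m \<alpha> S) = (\<Sum>\<alpha>\<in>E. smult (c \<alpha>) (binomial_average b (m \<alpha>)))"
proof (rule poly_eq_poly_eq_iff[THEN iffD1], rule ext)
  fix t :: real
  have "poly (binomial_average b (\<lambda>S. \<Sum>\<alpha>\<in>E. c \<alpha> * m \<alpha> S)) t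
      = (\<Sum>S\<in>Pow {..<b}. \<Sum>\<alpha>\<in>E. c \<alpha> * (t ^ card S * (1 - t) ^ (b - card S) * m \<alpha> S))"
    by (simp add: poly_binomial_average sum_distrib_left mult_ac)
  also have "\<dots> = (\<Sum>\<alpha>\<in>E. \<Sum>S\<in>Pow {..<b}. c \<alpha> * (t ^ card S * (1 - t) ^ (b - card S) * m \<alpha> S))"
    by (rule sum.swap)
  also have "\<dots> = poly (\<Sum>\<alpha>\<in>E. smult (c \<alpha>) (binomial_average b (m \<alpha>))) t"
    by (simp add: poly_sum poly_binomial_average sum_distrib_left)
  finally show "poly (binomial_average b (\<lambda>S. \<Sum>\<alpha>\<in>E. c \<alpha> * m \<alpha> S)) t
      = poly (\<Sum>\<alpha>\<in>E. smult (c \<alpha>) (binomial_average b (m \<alpha>))) t" .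
qed

lemma card_meeting_disjoint_family_le:
  assumes "finite A" "disjoint_family_on B I"
  shows "card {j\<in>I. B j \<inter> A \<noteq> {}} \<le> card A"
proof -
  define g where "g j = (SOME i. i \<in> B j \<inter> A)" for j
  have g: "g j \<in> B j \<inter> A" if "B j \<inter> A \<noteq> {}" for j
    unfolding g_def by (rule someI_ex) (use that in blast)
  have "inj_on g {j\<in>I. B j \<inter> A \<noteq> {}}"
  proof (rule inj_onI)
    fix j k assume j: "j \<in> {j\<in>I. B j \<inter> A \<noteq> {}}" and k: "k \<in> {j\<in>I. B j \<inter> A \<noteq> {}}"
      and "g j = g k"
    then have "B j \<inter> B k \<noteq> {}"
      using g[of j] g[of k] by auto
    then show "j = k"
      using disjoint_family_onD[OF assms(2), of j k] j k by auto
  qed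
  moreover have "g ` {j\<in>I. B j \<inter> A \<noteq> {}} \<subseteq> A"
    using g by blast
  ultimately show ?thesis
    using assms(1) by (rule card_inj_on_le)
qed

lemma finite_exps: "finite (exps n d)"
proof -
  have bound: "\<alpha> i \<le> d" if "\<alpha> \<in> exps n d" "i < n" for \<alpha> i
  proof -
    have "\<alpha> i \<le> (\<Sum>i<n. \<alpha> i)"
      using that(2) by (intro member_le_sum) auto
    then show ?thesis
      using that(1) by (simp add: exps_def)
  qed
  then have "exps n d \<subseteq> {\<alpha>. \<forall>i. (i \<in> {..<n} \<longrightarrow> \<alpha> i \<in> {..d}) \<and> (i \<notin> {..<n} \<longrightarrow> \<alpha> i = 0)}"
    by (auto simp: exps_def)
  moreover have "finite {\<alpha>. \<forall>i. (i \<in> {..<n} \<longrightarrow> \<alpha> i \<in> {..d}) \<and> (i \<notin> {..<n} \<longrightarrow> \<alpha> i = (0::nat))}"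
    by (rule finite_set_of_finite_funs) auto
  ultimately show ?thesis
    by (rule finite_subset)
qed

lemma embed_flip: "embed (flip x V) i = (if i \<in> V then 1 - embed x i else embed x i)"
  by (auto simp: embed_def flip_def)

lemma monomial_flip_blocks:
  fixes b :: nat
  assumes blocks: "\<And>j. j < b \<Longrightarrow> B j \<subseteq> {..<n}" and disj: "disjoint_family_on B {..<b}"
    and S: "S \<subseteq> {..<b}"
  shows "(\<Prod>i<n. embed (flip x (\<Union>j\<in>S. B j)) i ^ \<alpha> i)
    = (\<Prod>i\<in>{..<n} - (\<Union>j<b. B j). embed x i ^ \<alpha> i) *
      (\<Prod>j<b. if j \<in> S then \<Prod>i\<in>B j. (1 - embed x i) ^ \<alpha> i else \<Prod>i\<in>B j. embed x i ^ \<alpha> i)"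
proof -
  define U where "U = (\<Union>j<b. B j)"
  have finite_blocks: "finite (B j)" if "j < b" for j
    using blocks[OF that] by (rule finite_subset) simp
  define z where "z i = embed (flip x (\<Union>j\<in>S. B j)) i ^ \<alpha> i" for i
  have "U \<subseteq> {..<n}"
    using blocks by (auto simp: U_def)
  then have "(\<Prod>i<n. z i) = (\<Prod>i\<in>{..<n}-U. z i) * (\<Prod>i\<in>U. z i)"
    by (simp add: prod.subset_diff)
  also have "(\<Prod>i\<in>{..<n}-U. z i) = (\<Prod>i\<in>{..<n}-U. embed x i ^ \<alpha> i)"
    using S by (intro prod.cong) (auto simp: z_def embed_flip U_def)
  also have "(\<Prod>i\<in>U. z i) = (\<Prod>j<b. \<Prod>i\<in>B j. z i)"
    unfolding U_def
    by (rule prod.UNION_disjoint) (use finite_blocks disj in \<open>auto simp: disjoint_family_on_def\<close>)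
  also have "\<dots> = (\<Prod>j<b. if j \<in> S then \<Prod>i\<in>B j. (1 - embed x i) ^ \<alpha> i else \<Prod>i\<in>B j. embed x i ^ \<alpha> i)"
  proof (rule prod.cong)
    fix j assume j: "j \<in> {..<b}"
    have flipped: "(\<exists>k\<in>S. i \<in> B k) \<longleftrightarrow> j \<in> S" if i: "i \<in> B j" for i
    proof
      assume "\<exists>k\<in>S. i \<in> B k"
      then obtain k where "k \<in> S" "i \<in> B k"
        by blast
      then show "j \<in> S"
        using disjoint_family_onD[OF disj, of k j] S j i by (cases "k = j") auto
    qed (use i in blast)
    show "(\<Prod>i\<in>B j. z i)
        = (if j \<in> S then \<Prod>i\<in>B j. (1 - embed x i) ^ \<alpha> i else \<Prod>i\<in>B j. embed x i ^ \<alpha> i)"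
      by (simp add: z_def embed_flip flipped cong: prod.cong)
  qed simp
  finally show ?thesis
    unfolding z_def U_def .
qed

text \<open>Each block enters the symmetrized monomial through a single linear factor, which is
  constant unless the block meets the support of the monomial.\<close>

lemma degree_binomial_average_monomial:
  assumes blocks: "\<And>j. j < b \<Longrightarrow> B j \<subseteq> {..<n}" and disj: "disjoint_family_on B {..<b}"
  shows "degree (binomial_average b (\<lambda>S. \<Prod>i<n. embed (flip x (\<Union>j\<in>S. B j)) i ^ \<alpha> i))
    \<le> (\<Sum>i<n. \<alpha> i)"
proof -
  define a where "a j = (\<Prod>i\<in>B j. embed x i ^ \<alpha> i)" for j
  define e where "e j = (\<Prod>i\<in>B j. (1 - embed x i) ^ \<alpha> i)" for j
  define C where "C = (\<Prod>i\<in>{..<n} - (\<Union>j<b. B j). embed x i ^ \<alpha> i)"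
  define supp where "supp = {i\<in>{..<n}. \<alpha> i \<noteq> 0}"
  have "binomial_average b (\<lambda>S. \<Prod>i<n. embed (flip x (\<Union>j\<in>S. B j)) i ^ \<alpha> i)
      = binomial_average b (\<lambda>S. C * (\<Prod>j<b. if j \<in> S then e j else a j))"
    unfolding a_def e_def C_def by (rule binomial_average_cong) (rule monomial_flip_blocks[OF blocks disj])
  also have "\<dots> = smult C (\<Prod>j<b. [:a j, e j - a j:])"
    by (rule binomial_average_prod)
  finally have symmetrized: "binomial_average b (\<lambda>S. \<Prod>i<n. embed (flip x (\<Union>j\<in>S. B j)) i ^ \<alpha> i)
      = smult C (\<Prod>j<b. [:a j, e j - a j:])" .
  have factor: "degree [:a j, e j - a j:] \<le> of_bool (B j \<inter> supp \<noteq> {})" if "j < b" for j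
  proof (cases "B j \<inter> supp = {}")
    case True
    then have "\<alpha> i = 0" if "i \<in> B j" for i
      using blocks[OF \<open>j < b\<close>] that by (auto simp: supp_def)
    then show ?thesis
      by (simp add: a_def e_def)
  next
    case False
    then show ?thesis
      using degree_pCons_le[of "a j" "[:e j - a j:]"] by simp
  qed
  have "degree (smult C (\<Prod>j<b. [:a j, e j - a j:])) \<le> (\<Sum>j<b. degree [:a j, e j - a j:])"
    using degree_smult_le degree_prod_sum_le[of "{..<b}" "\<lambda>j. [:a j, e j - a j:]"] by (simp add: o_def)
  also have "\<dots> \<le> (\<Sum>j<b. of_bool (B j \<inter> supp \<noteq> {}))"
    using factor by (intro sum_mono) auto
  also have "\<dots> = card {j\<in>{..<b}. B j \<inter> supp \<noteq> {}}"
    by (simp add: Int_def)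
  also have "\<dots> \<le> card supp"
    using disj by (intro card_meeting_disjoint_family_le) (simp add: supp_def)
  also have "\<dots> \<le> (\<Sum>i\<in>supp. \<alpha> i)"
    using sum_mono[of supp "\<lambda>_. 1" \<alpha>] by (simp add: supp_def)
  also have "\<dots> \<le> (\<Sum>i<n. \<alpha> i)"
    by (intro sum_mono2) (auto simp: supp_def)
  finally show ?thesis
    unfolding symmetrized .
qed

lemma degree_binomial_average_le:
  assumes blocks: "\<And>j. j < b \<Longrightarrow> B j \<subseteq> {..<n}" and disj: "disjoint_family_on B {..<b}"
    and p: "poly_deg_le n d p"
  shows "degree (binomial_average b (\<lambda>S. p (embed (flip x (\<Union>j\<in>S. B j))))) \<le> d"
proof -
  obtain c where c: "\<And>y. p y = (\<Sum>\<alpha>\<in>exps n d. c \<alpha> * (\<Prod>i<n. y i ^ \<alpha> i))"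
    using p unfolding poly_deg_le_def by blast
  have "binomial_average b (\<lambda>S. p (embed (flip x (\<Union>j\<in>S. B j))))
      = (\<Sum>\<alpha>\<in>exps n d. smult (c \<alpha>)
           (binomial_average b (\<lambda>S. \<Prod>i<n. embed (flip x (\<Union>j\<in>S. B j)) i ^ \<alpha> i)))"
    unfolding c by (rule binomial_average_sum)
  also have "degree \<dots> \<le> d"
  proof (rule degree_sum_le)
    show "finite (exps n d)"
      by (rule finite_exps)
    fix \<alpha> assume "\<alpha> \<in> exps n d"
    then have "(\<Sum>i<n. \<alpha> i) \<le> d"
      by (simp add: exps_def)
    then show "degree (smult (c \<alpha>) (binomial_average b (\<lambda>S. \<Prod>i<n. embed (flip x (\<Union>j\<in>S. B j)) i ^ \<alpha> i))) \<le> d"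
      using degree_binomial_average_monomial[OF blocks disj, of x \<alpha>]
      by (meson degree_smult_le order.trans)
  qed
  finally show ?thesis .
qed

section \<open>Polynomials on the cube and block sensitivity\<close>

lemma poly_deg_le_monomial:
  assumes "\<alpha> \<in> exps n d"
  shows "poly_deg_le n d (\<lambda>y. \<Prod>i<n. y i ^ \<alpha> i)"
proof -
  have "exps n d \<inter> {\<beta>. \<beta> = \<alpha>} = {\<alpha>}"
    using assms by auto
  then have eq: "(\<Prod>i<n. y i ^ \<alpha> i) = (\<Sum>\<beta>\<in>exps n d. of_bool (\<beta> = \<alpha>) * (\<Prod>i<n. y i ^ \<beta> i))"
    for y :: "nat \<Rightarrow> real"
    by (simp add: finite_exps)
  show ?thesis
    unfolding poly_deg_le_def by (rule exI[of _ "\<lambda>\<beta>. of_bool (\<beta> = \<alpha>)"], intro allI, rule eq)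
qed

lemma poly_deg_le_sum:
  assumes "finite K" "\<And>k. k \<in> K \<Longrightarrow> poly_deg_le n d (p k)"
  shows "poly_deg_le n d (\<lambda>y. \<Sum>k\<in>K. c k * p k y)"
proof -
  have "\<forall>k\<in>K. \<exists>ck. \<forall>y. p k y = (\<Sum>\<alpha>\<in>exps n d. ck \<alpha> * (\<Prod>i<n. y i ^ \<alpha> i))"
    using assms(2) unfolding poly_deg_le_def by blast
  then obtain ck where ck: "\<And>k y. k \<in> K \<Longrightarrow> p k y = (\<Sum>\<alpha>\<in>exps n d. ck k \<alpha> * (\<Prod>i<n. y i ^ \<alpha> i))"
    by metis
  have eq: "(\<Sum>k\<in>K. c k * p k y) = (\<Sum>\<alpha>\<in>exps n d. (\<Sum>k\<in>K. c k * ck k \<alpha>) * (\<Prod>i<n. y i ^ \<alpha> i))" for y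
  proof -
    have "(\<Sum>k\<in>K. c k * p k y) = (\<Sum>k\<in>K. \<Sum>\<alpha>\<in>exps n d. c k * ck k \<alpha> * (\<Prod>i<n. y i ^ \<alpha> i))"
      by (simp add: ck sum_distrib_left mult.assoc)
    also have "\<dots> = (\<Sum>\<alpha>\<in>exps n d. \<Sum>k\<in>K. c k * ck k \<alpha> * (\<Prod>i<n. y i ^ \<alpha> i))"
      by (rule sum.swap)
    also have "\<dots> = (\<Sum>\<alpha>\<in>exps n d. (\<Sum>k\<in>K. c k * ck k \<alpha>) * (\<Prod>i<n. y i ^ \<alpha> i))"
      by (simp add: sum_distrib_right)
    finally show ?thesis .
  qed
  show ?thesis
    unfolding poly_deg_le_def by (rule exI[of _ "\<lambda>\<alpha>. \<Sum>k\<in>K. c k * ck k \<alpha>"]) (simp add: eq)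
qed

lemma poly_deg_le_one_minus:
  assumes "poly_deg_le n d p"
  shows "poly_deg_le n d (\<lambda>y. 1 - p y)"
proof -
  obtain c where c: "\<And>y. p y = (\<Sum>\<alpha>\<in>exps n d. c \<alpha> * (\<Prod>i<n. y i ^ \<alpha> i))"
    using assms unfolding poly_deg_le_def by blast
  have "exps n d \<inter> {\<alpha>. \<alpha> = (\<lambda>_. 0)} = {\<lambda>_. 0}"
    by (auto simp: exps_def)
  then have "1 = (\<Sum>\<alpha>\<in>exps n d. of_bool (\<alpha> = (\<lambda>_. 0)) * (\<Prod>i<n. y i ^ \<alpha> i))" for y :: "nat \<Rightarrow> real"
    by (simp add: finite_exps)
  then have eq: "1 - p y = (\<Sum>\<alpha>\<in>exps n d. (of_bool (\<alpha> = (\<lambda>_. 0)) - c \<alpha>) * (\<Prod>i<n. y i ^ \<alpha> i))" for y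
    by (simp add: c left_diff_distrib sum_subtractf)
  show ?thesis
    unfolding poly_deg_le_def by (rule exI[of _ "\<lambda>\<alpha>. of_bool (\<alpha> = (\<lambda>_. 0)) - c \<alpha>"]) (simp add: eq)
qed

lemma poly_deg_le_prod_affine: "poly_deg_le n n (\<lambda>y. \<Prod>i<n. a i + c i * y i)"
proof -
  have monomial: "poly_deg_le n n (\<lambda>y. \<Prod>i<n. y i ^ of_bool (i \<in> T))" if "T \<in> Pow {..<n}" for T
  proof (rule poly_deg_le_monomial)
    have "card ({..<n} \<inter> {i. i \<in> T}) \<le> n"
      using card_mono[of "{..<n}" "{..<n} \<inter> {i. i \<in> T}"] by simp
    then show "(\<lambda>i. of_bool (i \<in> T)) \<in> exps n n"
      using that by (auto simp: exps_def)
  qed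
  have "(\<Prod>i<n. a i + c i * y i)
      = (\<Sum>T\<in>Pow {..<n}. ((\<Prod>i\<in>T. c i) * (\<Prod>i\<in>{..<n}-T. a i)) * (\<Prod>i<n. y i ^ of_bool (i \<in> T)))" for y
  proof -
    have "(\<Prod>i<n. c i * y i + a i) = (\<Sum>T\<in>Pow {..<n}. (\<Prod>i\<in>T. c i * y i) * (\<Prod>i\<in>{..<n}-T. a i))"
      by (rule prod_add) simp
    also have "\<dots> = (\<Sum>T\<in>Pow {..<n}. ((\<Prod>i\<in>T. c i) * (\<Prod>i\<in>{..<n}-T. a i)) * (\<Prod>i<n. y i ^ of_bool (i \<in> T)))"
    proof (rule sum.cong)
      fix T assume "T \<in> Pow {..<n}"
      then have "(\<Prod>i<n. y i ^ of_bool (i \<in> T)) = (\<Prod>i\<in>T. y i)"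
        by (intro prod.mono_neutral_cong_right) auto
      then show "(\<Prod>i\<in>T. c i * y i) * (\<Prod>i\<in>{..<n}-T. a i)
          = ((\<Prod>i\<in>T. c i) * (\<Prod>i\<in>{..<n}-T. a i)) * (\<Prod>i<n. y i ^ of_bool (i \<in> T))"
        by (simp add: prod.distrib)
    qed simp
    finally show ?thesis
      by (simp add: add.commute)
  qed
  then show ?thesis
    using poly_deg_le_sum[of "Pow {..<n}", OF _ monomial] by simp
qed

lemma exists_poly_interpolating_cube:
  "\<exists>p. poly_deg_le n n p \<and> (\<forall>x\<in>cube n. p (embed x) = of_bool (f x))"
proof -
  define p where "p y = (\<Sum>S\<in>cube n. of_bool (f S) *
      (\<Prod>i<n. (if i \<in> S then 0 else 1) + (if i \<in> S then 1 else -1) * y i))" for y :: "nat \<Rightarrow> real"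
  have "poly_deg_le n n p"
    unfolding p_def by (intro poly_deg_le_sum poly_deg_le_prod_affine) (simp add: cube_def)
  moreover have "p (embed x) = of_bool (f x)" if x: "x \<in> cube n" for x
  proof -
    have "(\<Prod>i<n. (if i \<in> S then 0 else 1) + (if i \<in> S then 1 else -1) * embed x i) = (if S = x then 1 else 0)"
      if S: "S \<in> cube n" for S
    proof (cases "S = x")
      case False
      then obtain i where "i \<in> S \<and> i \<notin> x \<or> i \<in> x \<and> i \<notin> S"
        by blast
      moreover have "i < n"
        using calculation S x by (auto simp: cube_def)
      ultimately show ?thesis
        using False by (intro trans[OF prod_zero]) (auto simp: embed_def)
    qed (auto simp: embed_def intro!: prod.neutral)
    then have "p (embed x) = (\<Sum>S\<in>cube n. if S = x then of_bool (f S) else 0)"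
      unfolding p_def by (intro sum.cong) simp_all
    also have "\<dots> = of_bool (f x)"
      using x by (simp add: cube_def)
    finally show ?thesis .
  qed
  ultimately show ?thesis
    by blast
qed

lemma approx_deg_witness:
  obtains p where "poly_deg_le n (approx_deg n f) p" "approximates n (1/3) f p"
proof -
  obtain p where "poly_deg_le n n p" "\<forall>x\<in>cube n. p (embed x) = of_bool (f x)"
    using exists_poly_interpolating_cube by blast
  moreover from this(2) have "approximates n (1/3) f p"
    by (simp add: approximates_def)
  ultimately have "\<exists>d p. poly_deg_le n d p \<and> approximates n (1/3) f p"
    by blast
  from LeastI_ex[OF this] show ?thesis
    using that unfolding approx_deg_def by blast
qed

lemma approximates_Not:
  "approximates n \<epsilon> f p \<Longrightarrow> approximates n \<epsilon> (\<lambda>x. \<not> f x) (\<lambda>y. 1 - p y)"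
  unfolding approximates_def by (auto simp: of_bool_def split: if_splits)

lemma sensitive_block_count_le:
  assumes "\<forall>i<t. R i \<subseteq> {0..<n}" "\<forall>i<t. \<forall>j<t. i \<noteq> j \<longrightarrow> R i \<inter> R j = {}"
    and "\<forall>i<t. f x \<noteq> f (flip x (R i))"
  shows "t \<le> n"
proof -
  have "R i \<noteq> {}" if "i < t" for i
    using assms(3) that by (auto simp: flip_def)
  then have "{j\<in>{..<t}. R j \<inter> {0..<n} \<noteq> {}} = {..<t}"
    using assms(1) by (auto simp: Int_absorb2)
  moreover have "disjoint_family_on R {..<t}"
    using assms(2) by (auto simp: disjoint_family_on_def)
  ultimately show ?thesis
    using card_meeting_disjoint_family_le[of "{0..<n}" R "{..<t}"] by simp
qed

lemma local_bs_witness: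
  obtains R :: "nat \<Rightarrow> nat set"
  where "\<forall>i<local_bs n f x. R i \<subseteq> {0..<n}"
    "\<forall>i<local_bs n f x. \<forall>j<local_bs n f x. i \<noteq> j \<longrightarrow> R i \<inter> R j = {}"
    "\<forall>i<local_bs n f x. f x \<noteq> f (flip x (R i))"
proof -
  let ?T = "{t. \<exists>R :: nat \<Rightarrow> nat set. (\<forall>i<t. R i \<subseteq> {0..<n}) \<and>
      (\<forall>i<t. \<forall>j<t. i \<noteq> j \<longrightarrow> R i \<inter> R j = {}) \<and> (\<forall>i<t. f x \<noteq> f (flip x (R i)))}"
  have "?T \<subseteq> {..n}"
  proof
    fix t assume "t \<in> ?T"
    then have "t \<le> n"
      by (elim CollectE exE conjE) (rule sensitive_block_count_le)
    then show "t \<in> {..n}"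
      by simp
  qed
  then have "Max ?T \<in> ?T"
    by (intro Max_in) (auto dest: finite_subset)
  then show ?thesis
    using that unfolding local_bs_def by blast
qed

lemma bs_witness:
  obtains x where "x \<in> cube n" "bs n f = local_bs n f x"
proof -
  have "Max (local_bs n f ` cube n) \<in> local_bs n f ` cube n"
    by (intro Max_in) (auto simp: cube_def)
  then show ?thesis
    using that unfolding bs_def by auto
qed

lemma degree_bound_from_slope_at_0:
  fixes R :: "real poly"
  assumes deg: "degree R \<le> d"
    and bounds: "\<And>t. 0 \<le> t \<Longrightarrow> t \<le> 1 \<Longrightarrow> -1/3 \<le> poly R t \<and> poly R t \<le> 4/3"
    and start: "poly R 0 \<le> 1/3" and slope: "real b * (2/3 - poly R 0) \<le> coeff R 1"
  shows "real b \<le> 4 * real d ^ 2"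
proof -
  have gap: "0 < 2/3 - poly R 0"
    using start by simp
  have "3/2 - poly R 0 / 2 \<le> 4 * (2/3 - poly R 0)"
    using start by simp
  note scaled = mult_right_mono[OF this, of "real d ^ 2"]
  have "real b * (2/3 - poly R 0) \<le> coeff R 1"
    by (rule slope)
  also have "\<dots> \<le> (4/3 - -1/3 - (poly R 0 - -1/3) / 2) * real d ^ 2"
    by (rule markov_endpoint[OF deg bounds])
  also have "\<dots> = (3/2 - poly R 0 / 2) * real d ^ 2"
    by (simp add: field_simps)
  also have "\<dots> \<le> (4 * real d ^ 2) * (2/3 - poly R 0)"
    using scaled by (simp add: algebra_simps)
  finally show ?thesis
    using gap by (rule mult_right_le_imp_le)
qed

lemma sensitive_blocks_le_degree_sq_at_false:
  assumes x: "x \<in> cube n" and blocks: "\<And>j. j < b \<Longrightarrow> B j \<subseteq> {..<n}"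
    and disj: "disjoint_family_on B {..<b}"
    and "\<not> f x" and sens: "\<And>j. j < b \<Longrightarrow> f (flip x (B j))"
    and p: "poly_deg_le n d p" and approx: "approximates n (1/3) f p"
  shows "real b \<le> 4 * real d ^ 2"
proof -
  define v where "v S = p (embed (flip x (\<Union>j\<in>S. B j)))" for S
  define R where "R = binomial_average b v"
  have approx_v: "\<bar>of_bool (f (flip x (\<Union>j\<in>S. B j))) - v S\<bar> \<le> 1/3" if "S \<subseteq> {..<b}" for S
  proof -
    have "B j \<subseteq> {..<n}" if "j \<in> S" for j
      using blocks \<open>S \<subseteq> {..<b}\<close> that by auto
    then have "flip x (\<Union>j\<in>S. B j) \<in> cube n"
      using x by (force simp: cube_def flip_def)
    then show ?thesis
      using approx unfolding approximates_def v_def by blast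
  qed
  have "degree R \<le> d"
    unfolding R_def v_def by (rule degree_binomial_average_le[OF blocks disj p])
  moreover have "-1/3 \<le> poly R t \<and> poly R t \<le> 4/3" if "0 \<le> t" "t \<le> 1" for t
    unfolding R_def
  proof (rule poly_binomial_average_bounds[OF that])
    fix S assume "S \<subseteq> {..<b}"
    from abs_le_D1[OF approx_v[OF this]] abs_le_D2[OF approx_v[OF this]]
    show "-1/3 \<le> v S \<and> v S \<le> 4/3"
      by (cases "f (flip x (\<Union>j\<in>S. B j))") auto
  qed
  moreover have "poly R 0 \<le> 1/3"
    using approx_v[of "{}"] \<open>\<not> f x\<close> by (simp add: R_def poly_binomial_average_0 flip_def)
  moreover have "real b * (2/3 - poly R 0) \<le> coeff R 1"
  proof -
    have "2/3 \<le> v {j}" if "j < b" for j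
      using abs_le_D1[OF approx_v[of "{j}"]] sens[OF that] that by simp
    then have "real b * (2/3) \<le> (\<Sum>j<b. v {j})"
      using sum_mono[of "{..<b}" "\<lambda>_. 2/3" "\<lambda>j. v {j}"] by simp
    then show ?thesis
      unfolding R_def coeff_1_binomial_average poly_binomial_average_0 by (simp add: algebra_simps)
  qed
  ultimately show ?thesis
    by (rule degree_bound_from_slope_at_0)
qed

lemma sensitive_blocks_le_degree_sq:
  assumes x: "x \<in> cube n" and blocks: "\<And>j. j < b \<Longrightarrow> B j \<subseteq> {..<n}"
    and disj: "disjoint_family_on B {..<b}"
    and sens: "\<And>j. j < b \<Longrightarrow> f (flip x (B j)) \<noteq> f x"
    and p: "poly_deg_le n d p" and approx: "approximates n (1/3) f p"
  shows "real b \<le> 4 * real d ^ 2"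
proof (cases "f x")
  case True
  show ?thesis
  proof (rule sensitive_blocks_le_degree_sq_at_false[OF x blocks disj])
    show "\<not> \<not> f x" "\<And>j. j < b \<Longrightarrow> \<not> f (flip x (B j))"
      using True sens by auto
    show "poly_deg_le n d (\<lambda>y. 1 - p y)"
      using p by (rule poly_deg_le_one_minus)
    show "approximates n (1/3) (\<lambda>y. \<not> f y) (\<lambda>y. 1 - p y)"
      using approx by (rule approximates_Not)
  qed
next
  case False
  then show ?thesis
    using sens by (intro sensitive_blocks_le_degree_sq_at_false[OF x blocks disj _ _ p approx]) auto
qed

theorem theorem2:
  fixes n :: nat and f :: "nat set \<Rightarrow> bool"
  assumes "n \<ge> 1"
  shows "real (approx_deg n f) ^ 2 \<ge> sqrt (6 / 101) * real (bs n f)"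
proof -
  obtain x where x: "x \<in> cube n" "bs n f = local_bs n f x"
    by (rule bs_witness)
  obtain B where B: "\<forall>i<bs n f. B i \<subseteq> {0..<n}" "\<forall>i<bs n f. \<forall>j<bs n f. i \<noteq> j \<longrightarrow> B i \<inter> B j = {}"
    "\<forall>i<bs n f. f x \<noteq> f (flip x (B i))"
    unfolding x(2) by (rule local_bs_witness)
  obtain p where p: "poly_deg_le n (approx_deg n f) p" "approximates n (1/3) f p"
    by (rule approx_deg_witness)
  have "real (bs n f) \<le> 4 * real (approx_deg n f) ^ 2"
  proof (rule sensitive_blocks_le_degree_sq[OF x(1) _ _ _ p])
    show "B j \<subseteq> {..<n}" if "j < bs n f" for j
      using B(1) that by (simp add: atLeast0LessThan)
    show "disjoint_family_on B {..<bs n f}"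
      using B(2) by (auto simp: disjoint_family_on_def)
    show "f (flip x (B j)) \<noteq> f x" if "j < bs n f" for j
      using B(3) that by auto
  qed
  moreover have "sqrt (6 / 101) \<le> 1 / 4"
    by (rule real_le_lsqrt) (simp_all add: power2_eq_square)
  ultimately have "sqrt (6 / 101) * real (bs n f) \<le> 1 / 4 * (4 * real (approx_deg n f) ^ 2)"
    by (intro mult_mono) auto
  then show ?thesis
    by simp
qed

end
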